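(* Let $n,a,t\in\mathbb N$ with $t<a<n$. Let $\mathcal F\subseteq\binom{[n]}{a}$ be an ideal of the partial order $\preceq_a$ and let $\mathcal G\subseteq\binom{[n]}{a}$. Then the following are equivalent: (a) $|F\cap G|\le t$ for all $F\in\mathcal F$, $G\in\mathcal G$; (b) $L_{t+1}(G)\not\preceq_{t+1}R_{t+1}(F)$ for all $F\in\mathcal F$ and $G\in\mathcal G$.
   Context: $[n]=\{1,\dots,n\}$, $\binom{[n]}{l}$ is the family of $l$-element subsets of $[n]$. For $X\subseteq[n]$ and $1\le i\le|X|$, $m(X,i)$ is the $i$-th smallest element of $X$. For $l\in[n]$, the partial order $\preceq_l$ on $\binom{[n]}{l}$ is defined by $X\preceq_l Y$ iff $m(X,i)\le m(Y,i)$ for all $1\le i\le l$. An ideal of a poset is a downward-closed subset. For $X\in\binom{[n]}{a}$ and $j\le a$, $L_j(X)=\{m(X,i):1\le i\le j\}$ (the $j$ smallest elements of $X$) and $R_j(X)=\{m(X,i):a-j+1\le i\le a\}$ (the $j$ largest elements of $X$). *)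

theory Defs
  imports Main
begin

definition ksubsets :: "nat \<Rightarrow> nat \<Rightarrow> nat set set" where
  "ksubsets n l = {X. X \<subseteq> {1..n} \<and> card X = l}"

text \<open>m(X,i): the i-th smallest element of X (1-indexed, 1 <= i <= card X).\<close>
definition mth :: "nat set \<Rightarrow> nat \<Rightarrow> nat" where
  "mth X i = sorted_list_of_set X ! (i - 1)"

definition shift_le :: "nat \<Rightarrow> nat set \<Rightarrow> nat set \<Rightarrow> bool" where
  "shift_le l X Y \<longleftrightarrow> (\<forall>i\<in>{1..l}. mth X i \<le> mth Y i)"

definition shift_ideal :: "nat \<Rightarrow> nat \<Rightarrow> nat set set \<Rightarrow> bool" where
  "shift_ideal n l F \<longleftrightarrow> F \<subseteq> ksubsets n l \<and>
     (\<forall>Y\<in>F. \<forall>X\<in>ksubsets n l. shift_le l X Y \<longrightarrow> X \<in> F)"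

definition Lj :: "nat \<Rightarrow> nat set \<Rightarrow> nat set" where
  "Lj j X = {mth X i | i. 1 \<le> i \<and> i \<le> j}"

definition Rj :: "nat \<Rightarrow> nat set \<Rightarrow> nat set" where
  "Rj j X = {mth X i | i. card X - j + 1 \<le> i \<and> i \<le> card X}"

end

theory Submission
  imports Defs
begin

text \<open>Let rank X x be the number of elements of X that are at most x. Then
  m(X,i) \<le> x iff i \<le> rank X x, so for sets of equal size X \<preceq> Y means that rank Y \<le> rank X
  pointwise, and rank L_j(X) = min j (rank X), rank R_j(X) = rank X - (|X| - j).
  If |F \<inter> G| > t, the common elements above x are among the elements of F above x, which
  yields L_{t+1}(G) \<preceq> R_{t+1}(F). Conversely, if L_{t+1}(G) \<preceq> R_{t+1}(F), adding to L_{t+1}(G)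
  the a - t - 1 smallest elements of its complement in [n] gives an a-set H \<preceq> F; it lies in
  the ideal and meets G in at least t + 1 elements.\<close>

definition rank :: "nat set \<Rightarrow> nat \<Rightarrow> nat" where
  "rank X x = card {y\<in>X. y \<le> x}"

lemma rank_mono: "finite X \<Longrightarrow> x \<le> x' \<Longrightarrow> rank X x \<le> rank X x'"
  unfolding rank_def by (rule card_mono) auto

lemma rank_subset_mono: "finite Y \<Longrightarrow> X \<subseteq> Y \<Longrightarrow> rank X x \<le> rank Y x"
  unfolding rank_def by (rule card_mono) auto

lemma rank_le_card: "finite X \<Longrightarrow> rank X x \<le> card X"
  unfolding rank_def by (rule card_mono) auto

lemma rank_Un_disjoint:
  "finite X \<Longrightarrow> finite Y \<Longrightarrow> X \<inter> Y = {} \<Longrightarrow> rank (X \<union> Y) x = rank X x + rank Y x"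
  unfolding rank_def by (subst card_Un_disjoint[symmetric]) (auto intro: arg_cong[where f = card])

lemma card_eq_rank_add_card_greater: "finite X \<Longrightarrow> card X = rank X x + card {y\<in>X. x < y}"
  unfolding rank_def by (subst card_Un_disjoint[symmetric]) (auto intro: arg_cong[where f = card])

lemma card_add_rank_le:
  assumes "finite Y" "X \<subseteq> Y"
  shows "card X + rank Y x \<le> card Y + rank X x"
proof -
  have "card {y\<in>X. x < y} \<le> card {y\<in>Y. x < y}"
    using assms by (intro card_mono) auto
  then show ?thesis
    using card_eq_rank_add_card_greater[of X x] card_eq_rank_add_card_greater[of Y x]
      assms finite_subset by fastforce
qed

lemma strict_sorted_nth_le_iff:
  fixes xs :: "'a::linorder list"
  shows "sorted_wrt (<) xs \<Longrightarrow> i < length xs \<Longrightarrow> j < length xs \<Longrightarrow>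
    xs ! i \<le> xs ! j \<longleftrightarrow> i \<le> j"
  using sorted_wrt_nth_less[of "(<)" xs i j] sorted_wrt_nth_less[of "(<)" xs j i]
  by (cases i j rule: linorder_cases) auto

lemma set_drop_eq_nth_image: "set (drop m xs) = (!) xs ` {m..<length xs}"
proof (intro set_eqI iffI)
  fix z assume "z \<in> set (drop m xs)"
  then obtain k where "k < length xs - m" "z = xs ! (m + k)" by (auto simp: in_set_conv_nth)
  then show "z \<in> (!) xs ` {m..<length xs}" by auto
next
  fix z assume "z \<in> (!) xs ` {m..<length xs}"
  then obtain k where "m \<le> k" "k < length xs" "z = xs ! k" by auto
  then have "k - m < length (drop m xs)" "z = drop m xs ! (k - m)" by auto
  then show "z \<in> set (drop m xs)" by (metis nth_mem)
qed

lemma image_mth: "mth X ` {Suc m..k} = (!) (sorted_list_of_set X) ` {m..<k}"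
proof -
  have "(\<lambda>i. i - 1) ` {Suc m..k} = {m..<k}"
    by (auto simp: image_iff intro!: bexI[where x = "Suc _"])
  then show ?thesis unfolding mth_def by (metis image_image)
qed

lemma mth_mem: "finite X \<Longrightarrow> 1 \<le> i \<Longrightarrow> i \<le> card X \<Longrightarrow> mth X i \<in> X"
  using nth_mem[of "i - 1" "sorted_list_of_set X"] by (simp add: mth_def)

lemma rank_mth:
  assumes "finite X" "1 \<le> i" "i \<le> card X"
  shows "rank X (mth X i) = i"
proof -
  define xs where "xs = sorted_list_of_set X"
  have X: "X = set xs" and i: "i - 1 < length xs" and xs: "sorted_wrt (<) xs" "distinct xs"
    using assms by (simp_all add: xs_def)
  have mth: "mth X i = xs ! (i - 1)" unfolding mth_def xs_def ..
  have "{y\<in>X. y \<le> mth X i} = (!) xs ` {0..<i}"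
  proof (intro set_eqI iffI)
    fix y assume y: "y \<in> {y\<in>X. y \<le> mth X i}"
    then obtain m where m: "m < length xs" "y = xs ! m"
      unfolding X by (auto simp: in_set_conv_nth)
    then have "m \<le> i - 1" using y strict_sorted_nth_le_iff[OF xs(1) m(1) i] mth by simp
    then show "y \<in> (!) xs ` {0..<i}" using m assms(2) by auto
  next
    fix y assume "y \<in> (!) xs ` {0..<i}"
    then obtain m where m: "m < i" "y = xs ! m" by auto
    then have "m < length xs" using i by simp
    then show "y \<in> {y\<in>X. y \<le> mth X i}"
      using m strict_sorted_nth_le_iff[OF xs(1) _ i] mth unfolding X by auto
  qed
  also have "\<dots> = set (take i xs)" using i by (simp add: nth_image)
  finally show ?thesis using i xs(2) unfolding rank_def by (simp add: distinct_card)
qed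

lemma mth_le_iff_le_rank:
  assumes "finite X" "1 \<le> i" "i \<le> card X"
  shows "mth X i \<le> x \<longleftrightarrow> i \<le> rank X x"
proof
  assume "mth X i \<le> x"
  then show "i \<le> rank X x" using rank_mono[OF assms(1)] rank_mth[OF assms] by metis
next
  assume i: "i \<le> rank X x"
  show "mth X i \<le> x"
  proof (rule ccontr)
    assume "\<not> mth X i \<le> x"
    then have "{y\<in>X. y \<le> x} \<subset> {y\<in>X. y \<le> mth X i}" using mth_mem[OF assms] by auto
    then have "rank X x < rank X (mth X i)"
      unfolding rank_def using assms(1) by (intro psubset_card_mono) auto
    then show False using i rank_mth[OF assms] by simp
  qed
qed

lemma shift_le_iff_rank_le:
  assumes "finite X" "finite Y" "card X = l" "card Y = l"
  shows "shift_le l X Y \<longleftrightarrow> (\<forall>x. rank Y x \<le> rank X x)"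
proof
  assume le: "shift_le l X Y"
  show "\<forall>x. rank Y x \<le> rank X x"
  proof
    fix x
    let ?i = "rank Y x"
    show "?i \<le> rank X x"
    proof (cases "?i = 0")
      case False
      then have i: "1 \<le> ?i" "?i \<le> l" using rank_le_card[OF assms(2)] assms(4) by auto
      then have "mth Y ?i \<le> x" using mth_le_iff_le_rank[OF assms(2)] assms(4) by simp
      then have "mth X ?i \<le> x"
        using le i unfolding shift_le_def by (meson atLeastAtMost_iff order_trans)
      then show ?thesis using mth_le_iff_le_rank[OF assms(1)] i assms(3) by simp
    qed simp
  qed
next
  assume le: "\<forall>x. rank Y x \<le> rank X x"
  show "shift_le l X Y" unfolding shift_le_def
  proof
    fix i assume "i \<in> {1..l}"
    then have i: "1 \<le> i" "i \<le> l" by auto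
    have "i \<le> rank X (mth Y i)" using le rank_mth[OF assms(2)] i assms(4) by metis
    then show "mth X i \<le> mth Y i" using mth_le_iff_le_rank[OF assms(1)] i assms(3) by simp
  qed
qed

lemma nat_eq_min_of_same_thresholds:
  fixes r s j :: nat
  assumes "r \<le> j" and same: "\<forall>i\<in>{1..j}. i \<le> r \<longleftrightarrow> i \<le> s"
  shows "r = min j s"
proof (cases "r < j")
  case True
  then have "s \<le> r" using same[rule_format, of "Suc r"] by auto
  moreover have "r \<le> s" if "r \<noteq> 0" using same[rule_format, of r] that True by auto
  ultimately show ?thesis using True by (cases "r = 0") auto
next
  case False
  then show ?thesis using assms(1) same[rule_format, of j] by (cases "j = 0") auto
qed

lemma Lj_eq_set_take: "j \<le> card X \<Longrightarrow> Lj j X = set (take j (sorted_list_of_set X))"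
proof -
  assume "j \<le> card X"
  have "Lj j X = mth X ` {Suc 0..j}" unfolding Lj_def by auto
  also have "\<dots> = set (take j (sorted_list_of_set X))"
    using \<open>j \<le> card X\<close> by (simp add: image_mth nth_image)
  finally show ?thesis .
qed

lemma Rj_eq_set_drop: "Rj j X = set (drop (card X - j) (sorted_list_of_set X))"
proof -
  have "Rj j X = mth X ` {Suc (card X - j)..card X}" unfolding Rj_def by auto
  also have "\<dots> = set (drop (card X - j) (sorted_list_of_set X))"
    by (simp add: image_mth set_drop_eq_nth_image)
  finally show ?thesis .
qed

lemma
  assumes "finite X" "j \<le> card X"
  shows Lj_subset: "Lj j X \<subseteq> X"
    and card_Lj: "card (Lj j X) = j"
    and mth_Lj: "1 \<le> i \<Longrightarrow> i \<le> j \<Longrightarrow> mth (Lj j X) i = mth X i"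
proof -
  have sorted: "sorted_list_of_set (Lj j X) = take j (sorted_list_of_set X)"
    using assms(2) by (simp add: Lj_eq_set_take sorted_list_of_set.idem_if_sorted_distinct)
  show "Lj j X \<subseteq> X" using assms by (auto simp: Lj_eq_set_take dest: in_set_takeD)
  show "card (Lj j X) = j" using assms by (simp add: Lj_eq_set_take distinct_card)
  show "mth (Lj j X) i = mth X i" if "1 \<le> i" "i \<le> j"
    using that sorted unfolding mth_def by simp
qed

lemma
  assumes "finite X" "j \<le> card X"
  shows Rj_subset: "Rj j X \<subseteq> X"
    and card_Rj: "card (Rj j X) = j"
    and mth_Rj: "1 \<le> i \<Longrightarrow> i \<le> j \<Longrightarrow> mth (Rj j X) i = mth X (card X - j + i)"
proof -
  have sorted: "sorted_list_of_set (Rj j X) = drop (card X - j) (sorted_list_of_set X)"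
    by (simp add: Rj_eq_set_drop sorted_list_of_set.idem_if_sorted_distinct)
  show "Rj j X \<subseteq> X" using assms by (auto simp: Rj_eq_set_drop dest: in_set_dropD)
  show "card (Rj j X) = j" using assms by (simp add: Rj_eq_set_drop distinct_card)
  show "mth (Rj j X) i = mth X (card X - j + i)" if "1 \<le> i" "i \<le> j"
    using that assms sorted unfolding mth_def by simp
qed

lemma rank_Lj:
  assumes "finite X" "j \<le> card X"
  shows "rank (Lj j X) x = min j (rank X x)"
proof (rule nat_eq_min_of_same_thresholds)
  have fin: "finite (Lj j X)" using Lj_subset[OF assms] assms(1) by (rule finite_subset)
  show "rank (Lj j X) x \<le> j" using rank_le_card[OF fin] card_Lj[OF assms] by simp
  show "\<forall>i\<in>{1..j}. i \<le> rank (Lj j X) x \<longleftrightarrow> i \<le> rank X x"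
    using mth_le_iff_le_rank[OF fin] mth_le_iff_le_rank[OF assms(1)] mth_Lj[OF assms]
      card_Lj[OF assms] assms(2) by auto
qed

lemma rank_Rj:
  assumes "finite X" "j \<le> card X"
  shows "rank (Rj j X) x = rank X x - (card X - j)"
proof -
  have fin: "finite (Rj j X)" using Rj_subset[OF assms] assms(1) by (rule finite_subset)
  have "rank (Rj j X) x = min j (rank X x - (card X - j))"
  proof (rule nat_eq_min_of_same_thresholds)
    show "rank (Rj j X) x \<le> j" using rank_le_card[OF fin] card_Rj[OF assms] by simp
    show "\<forall>i\<in>{1..j}. i \<le> rank (Rj j X) x \<longleftrightarrow> i \<le> rank X x - (card X - j)"
    proof
      fix i assume i: "i \<in> {1..j}"
      then have "i \<le> rank (Rj j X) x \<longleftrightarrow> mth X (card X - j + i) \<le> x"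
        using mth_le_iff_le_rank[OF fin] mth_Rj[OF assms] card_Rj[OF assms] by simp
      also have "\<dots> \<longleftrightarrow> card X - j + i \<le> rank X x"
        using i assms(2) by (intro mth_le_iff_le_rank[OF assms(1)]) auto
      finally show "i \<le> rank (Rj j X) x \<longleftrightarrow> i \<le> rank X x - (card X - j)" by linarith
    qed
  qed
  then show ?thesis using rank_le_card[OF assms(1), of x] by simp
qed

lemma shift_le_Lj_Rj_if_card_Int_ge:
  assumes "finite X" "finite Y" "card X = card Y" "j \<le> card (X \<inter> Y)"
  shows "shift_le j (Lj j Y) (Rj j X)"
proof -
  have jX: "j \<le> card X" and jY: "j \<le> card Y"
    using assms card_mono[of X "X \<inter> Y"] card_mono[of Y "X \<inter> Y"] by auto
  have "rank (Rj j X) x \<le> rank (Lj j Y) x" for x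
  proof -
    have "card (X \<inter> Y) + rank X x \<le> card X + rank (X \<inter> Y) x"
      using assms(1) by (intro card_add_rank_le) auto
    moreover have "rank (X \<inter> Y) x \<le> rank Y x" using assms(2) by (intro rank_subset_mono) auto
    ultimately show ?thesis
      using rank_Rj[OF assms(1) jX] rank_Lj[OF assms(2) jY] rank_le_card[OF assms(1), of x]
        assms(4) jX by auto
  qed
  then show ?thesis
    using assms(1,2) jX jY
    by (subst shift_le_iff_rank_le)
      (auto intro: finite_subset[OF Lj_subset] finite_subset[OF Rj_subset] simp: card_Lj card_Rj)
qed

lemma ksubsetsD:
  assumes "X \<in> ksubsets n l"
  shows "X \<subseteq> {1..n}" "card X = l" "finite X"
  using assms unfolding ksubsets_def by (auto intro: finite_subset)

lemma ex_ksubset_shift_le_superset: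
  assumes S: "S \<subseteq> {1..n}" "card S = j" and X: "X \<in> ksubsets n a" and "j \<le> a"
    and le: "shift_le j S (Rj j X)"
  shows "\<exists>H\<in>ksubsets n a. S \<subseteq> H \<and> shift_le a H X"
proof -
  define A where "A = {1..n} - S"
  define C where "C = Lj (a - j) A"
  note X = ksubsetsD[OF X]
  have fin: "finite S" "finite A" using S(1) unfolding A_def by (auto intro: finite_subset)
  have "a \<le> n" using card_mono[OF _ X(1)] X(2) by simp
  then have k: "a - j \<le> card A" unfolding A_def using S fin(1) by (simp add: card_Diff_subset)
  have C: "C \<subseteq> A" "card C = a - j" "finite C"
    unfolding C_def using Lj_subset[OF fin(2) k] card_Lj[OF fin(2) k] fin(2)
    by (auto intro: finite_subset)
  have disj: "S \<inter> C = {}" using C(1) unfolding A_def by auto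
  have H: "S \<union> C \<in> ksubsets n a"
    using S C \<open>j \<le> a\<close> disj card_Un_disjoint[OF fin(1) C(3) disj] unfolding ksubsets_def A_def
    by auto
  have "rank X x \<le> rank (S \<union> C) x" for x
  proof -
    have Rj: "finite (Rj j X)" "card (Rj j X) = j"
      using Rj_subset[OF X(3)] card_Rj[OF X(3)] X \<open>j \<le> a\<close> by (auto intro: finite_subset)
    have "rank X x - (a - j) \<le> rank S x"
      using le shift_le_iff_rank_le[OF fin(1) Rj(1) S(2) Rj(2)] rank_Rj[OF X(3)] X(2) \<open>j \<le> a\<close>
      by simp
    moreover have "rank X x \<le> rank S x + rank A x"
      using rank_subset_mono[of "S \<union> A" X x] rank_Un_disjoint[OF fin] X(1) S(1) fin
      unfolding A_def by auto
    ultimately show ?thesis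
      using rank_Un_disjoint[OF fin(1) C(3) disj] rank_Lj[OF fin(2) k] unfolding C_def by simp
  qed
  then have "shift_le a (S \<union> C) X"
    using ksubsetsD[OF H] X by (subst shift_le_iff_rank_le) auto
  then show ?thesis using H by blast
qed

lemma shift_ideal_ex_card_Int_ge:
  assumes F: "shift_ideal n a F" "X \<in> F" and Y: "Y \<in> ksubsets n a" and "j \<le> a"
    and le: "shift_le j (Lj j Y) (Rj j X)"
  shows "\<exists>H\<in>F. j \<le> card (H \<inter> Y)"
proof -
  note Y' = ksubsetsD[OF Y]
  let ?S = "Lj j Y"
  have S: "?S \<subseteq> Y" "card ?S = j"
    using Lj_subset[OF Y'(3)] card_Lj[OF Y'(3)] Y'(2) \<open>j \<le> a\<close> by auto
  have "?S \<subseteq> {1..n}" "X \<in> ksubsets n a"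
    using S(1) Y'(1) F unfolding shift_ideal_def by auto
  then obtain H where H: "H \<in> ksubsets n a" "?S \<subseteq> H" "shift_le a H X"
    using ex_ksubset_shift_le_superset[OF _ S(2) _ \<open>j \<le> a\<close> le] by blast
  have "H \<in> F" using H(1,3) F unfolding shift_ideal_def by blast
  moreover have "j \<le> card (H \<inter> Y)"
    using card_mono[of "H \<inter> Y" ?S] S H(2) Y'(3) by auto
  ultimately show ?thesis by blast
qed

theorem lemma3:
  fixes n a t :: nat and F G :: "nat set set"
  assumes "t < a" and "a < n"
    and "shift_ideal n a F"
    and "G \<subseteq> ksubsets n a"
  shows "(\<forall>X\<in>F. \<forall>Y\<in>G. card (X \<inter> Y) \<le> t) \<longleftrightarrow>
         (\<forall>X\<in>F. \<forall>Y\<in>G. \<not> shift_le (t + 1) (Lj (t + 1) Y) (Rj (t + 1) X))"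
proof
  assume small: "\<forall>X\<in>F. \<forall>Y\<in>G. card (X \<inter> Y) \<le> t"
  show "\<forall>X\<in>F. \<forall>Y\<in>G. \<not> shift_le (t + 1) (Lj (t + 1) Y) (Rj (t + 1) X)"
  proof (intro ballI notI)
    fix X Y assume X: "X \<in> F" and Y: "Y \<in> G"
      and le: "shift_le (t + 1) (Lj (t + 1) Y) (Rj (t + 1) X)"
    have "Y \<in> ksubsets n a" "t + 1 \<le> a" using Y assms(1,4) by auto
    then obtain H where "H \<in> F" "t + 1 \<le> card (H \<inter> Y)"
      using shift_ideal_ex_card_Int_ge[OF assms(3) X _ _ le] by blast
    then show False using small Y by fastforce
  qed
next
  assume not_le: "\<forall>X\<in>F. \<forall>Y\<in>G. \<not> shift_le (t + 1) (Lj (t + 1) Y) (Rj (t + 1) X)"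
  show "\<forall>X\<in>F. \<forall>Y\<in>G. card (X \<inter> Y) \<le> t"
  proof (intro ballI)
    fix X Y assume X: "X \<in> F" and Y: "Y \<in> G"
    then have "X \<in> ksubsets n a" "Y \<in> ksubsets n a"
      using assms(3,4) unfolding shift_ideal_def by blast+
    then have "finite X" "finite Y" "card X = card Y" by (simp_all add: ksubsetsD)
    then show "card (X \<inter> Y) \<le> t"
      using shift_le_Lj_Rj_if_card_Int_ge[of X Y "t + 1"] not_le X Y by force
  qed
qed

end
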